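(* Consider the stochastic MPC scheme described in the context: the system $x(k+1)=Ax(k)+Bu(k)+w(k)$ under the control law $u(k)=Ke_0(k)+v_0^*(k)$ resulting from problem $(\mathcal{P}_k)$ (feasible at the time steps at which it is applied), with nominal update $z_0(k)=z_1(k-1)$ and $z(0)=x(0)$. Then the resulting closed-loop states $x(k)$ and inputs $u(k)$ satisfy the chance constraints $\Pr(x(k)\in\mathcal{X}\mid x(0))\ge p_x$ and $\Pr(u(k)\in\mathcal{U}\mid x(0))\ge p_u$.
   Context: System: $x(k+1)=Ax(k)+Bu(k)+w(k)$ with $x(k)\in\mathbb{R}^{n_x}$, $u(k)\in\mathbb{R}^{n_u}$, over a finite horizon $\bar N$; the disturbance sequence $W=[w(0)^\top,\dots,w(\bar N)^\top]^\top$ is a random vector with distribution $\mathcal{D}^W$ (not necessarily i.i.d. or zero mean). $\mathcal{X}\subseteq\mathbb{R}^{n_x}$, $\mathcal{U}\subseteq\mathbb{R}^{n_u}$ convex sets, $p_x,p_u$ probability levels; $\mathcal{A}\ominus\mathcal{B}=\{a\in\mathcal{A}: a+b\in\mathcal{A}\ \forall b\in\mathcal{B}\}$. A fixed gain $K$ is given. Let $e$ denote the process $e(k+1)=(A+BK)e(k)+w(k)$. For each $0\le k\le\bar N$, $\mathcal{R}^x_k$ is a set with $\Pr(e(k)\in\mathcal{R}^x_k\mid e(0)=0)\ge p_x$ and $\mathcal{R}^u_k$ a set with $\Pr(Ke(k)\in\mathcal{R}^u_k\mid Ke(0)=0)\ge p_u$. $\mathcal{Z}_f$ is a terminal set. Problem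 $(\mathcal{P}_k)$ at time $k$: minimize over $v_0,\dots,v_{N-1}$ the cost $\mathbb{E}_{W_k}\big(l_f(x_N)+\sum_{i=0}^{N-1}l_{k+i}(x_i,u_i)\big)$ subject to $x_i=z_i+e_i$, $u_i=Ke_i+v_i$, $z_{i+1}=Az_i+Bv_i$, $e_{i+1}=(A+BK)e_i+w_i$, where $W_k=[w_0^\top,\dots,w_N^\top]^\top$ has the conditional distribution of $[w(k)^\top,\dots,w(k+N)^\top]^\top$ given the realized $[w(0)^\top,\dots,w(k-1)^\top]^\top$; constraints $z_i\in\mathcal{X}\ominus\mathcal{R}^x_{i+k}$, $v_i\in\mathcal{U}\ominus\mathcal{R}^u_{i+k}$ ($i=0,\dots,N-1$), $z_N\in\mathcal{Z}_f$; initialization $x_0=x(k)$, $z_0=z_1(k-1)$ (with $z_0(0)=x(0)$), $e_0=x_0-z_0$. The applied input is $u(k)=Ke_0(k)+v_0^*(k)$ with $v^*(k)$ optimal for $(\mathcal{P}_k)$. *)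

theory Defs
  imports "HOL-Probability.Probability"
begin

definition pdiff :: "'a::ab_group_add set \<Rightarrow> 'a set \<Rightarrow> 'a set" where
  "pdiff S T = {a \<in> S. \<forall>b\<in>T. a + b \<in> S}"

fun zpred :: "real^'n^'n \<Rightarrow> real^'m^'n \<Rightarrow> real^'n \<Rightarrow> (nat \<Rightarrow> real^'m) \<Rightarrow> nat \<Rightarrow> real^'n" where
  "zpred A B z v 0 = z"
| "zpred A B z v (Suc i) = A *v zpred A B z v i + B *v v i"

definition mpc_feasible ::
  "real^'n^'n \<Rightarrow> real^'m^'n \<Rightarrow> (real^'n) set \<Rightarrow> (real^'m) set \<Rightarrow> (nat \<Rightarrow> (real^'n) set)
   \<Rightarrow> (nat \<Rightarrow> (real^'m) set) \<Rightarrow> (real^'n) set \<Rightarrow> nat \<Rightarrow> nat \<Rightarrow> real^'n \<Rightarrow> (nat \<Rightarrow> real^'m) \<Rightarrow> bool"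
  where
  "mpc_feasible A B X U Rx Ru Zf N k zinit v \<longleftrightarrow>
     (\<forall>i<N. zpred A B zinit v i \<in> pdiff X (Rx (i + k)) \<and> v i \<in> pdiff U (Ru (i + k)))
     \<and> zpred A B zinit v N \<in> Zf"

fun err_proc :: "real^'n^'n \<Rightarrow> real^'m^'n \<Rightarrow> real^'n^'m \<Rightarrow> (nat \<Rightarrow> 'w \<Rightarrow> real^'n) \<Rightarrow> nat \<Rightarrow> 'w \<Rightarrow> real^'n" where
  "err_proc A B K W 0 \<omega> = 0"
| "err_proc A B K W (Suc k) \<omega> = (A + B ** K) *v err_proc A B K W k \<omega> + W k \<omega>"

text \<open>Closed loop: pair (x(k), z_0(k)) with x(0) = z_0(0) = x0,
  u(k) = K (x(k) - z_0(k)) + v*_0(k), x(k+1) = A x(k) + B u(k) + w(k), z_0(k+1) = z_1(k) = A z_0(k) + B v*_0(k).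
  vs k \<omega> is the optimiser v*(k) of P_k (along the realisation \<omega>).\<close>
fun mpc_cl :: "real^'n^'n \<Rightarrow> real^'m^'n \<Rightarrow> real^'n^'m \<Rightarrow> (nat \<Rightarrow> 'w \<Rightarrow> real^'n) \<Rightarrow> real^'n
   \<Rightarrow> (nat \<Rightarrow> 'w \<Rightarrow> nat \<Rightarrow> real^'m) \<Rightarrow> nat \<Rightarrow> 'w \<Rightarrow> (real^'n) \<times> (real^'n)" where
  "mpc_cl A B K W x0 vs 0 \<omega> = (x0, x0)"
| "mpc_cl A B K W x0 vs (Suc k) \<omega> =
     (let x = fst (mpc_cl A B K W x0 vs k \<omega>); z = snd (mpc_cl A B K W x0 vs k \<omega>); v = vs k \<omega> 0 in
      (A *v x + B *v (K *v (x - z) + v) + W k \<omega>, A *v z + B *v v))"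

definition cl_x where "cl_x A B K W x0 vs k \<omega> = fst (mpc_cl A B K W x0 vs k \<omega>)"
definition cl_z where "cl_z A B K W x0 vs k \<omega> = snd (mpc_cl A B K W x0 vs k \<omega>)"
definition cl_u where
  "cl_u A B K W x0 vs k \<omega> = K *v (cl_x A B K W x0 vs k \<omega> - cl_z A B K W x0 vs k \<omega>) + vs k \<omega> 0"

end

theory Submission
  imports Defs
begin

(* The closed-loop state splits as x(k) = z_0(k) + e(k), with e the error process driven by the
   realised disturbances, and u(k) = v*_0(k) + K e(k).  Feasibility of P_k puts z_0(k) in X - R^x_k
   and v*_0(k) in U - R^u_k (Pontryagin differences), so the events e(k) in R^x_k and K e(k) in R^u_k
   imply x(k) in X and u(k) in U; monotonicity of the probability transfers the bounds p_x, p_u. *)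

lemma pdiff_add_mem: "a \<in> pdiff S T \<Longrightarrow> b \<in> T \<Longrightarrow> a + b \<in> S"
  unfolding pdiff_def by blast

lemma mpc_feasible_first_step:
  assumes "mpc_feasible A B X U Rx Ru Zf N k z v" and "0 < N"
  shows "z \<in> pdiff X (Rx k)" and "v 0 \<in> pdiff U (Ru k)"
  using assms unfolding mpc_feasible_def by (metis add_0 zpred.simps(1))+

lemma cl_x_eq_cl_z_plus_err:
  "cl_x A B K W x0 vs k \<omega> = cl_z A B K W x0 vs k \<omega> + err_proc A B K W k \<omega>"
proof (induction k)
  case 0
  then show ?case by (simp add: cl_x_def cl_z_def)
next
  case (Suc k)
  let ?x = "cl_x A B K W x0 vs k \<omega>" and ?z = "cl_z A B K W x0 vs k \<omega>"
  have "cl_x A B K W x0 vs (Suc k) \<omega> - cl_z A B K W x0 vs (Suc k) \<omega>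
      = A *v (?x - ?z) + B *v (K *v (?x - ?z)) + W k \<omega>"
    by (simp add: cl_x_def cl_z_def Let_def matrix_vector_right_distrib
        matrix_vector_mult_diff_distrib algebra_simps)
  also have "\<dots> = (A + B ** K) *v (?x - ?z) + W k \<omega>"
    by (simp add: matrix_vector_mult_add_rdistrib matrix_vector_mul_assoc)
  finally show ?case using Suc by (simp add: algebra_simps)
qed

lemma cl_u_eq_nominal_plus_feedback:
  "cl_u A B K W x0 vs k \<omega> = vs k \<omega> 0 + K *v err_proc A B K W k \<omega>"
  using cl_x_eq_cl_z_plus_err[of A B K W x0 vs k \<omega>] by (simp add: cl_u_def algebra_simps)

(* The smaller event need not be measurable; then its measure is 0, which is why 0 <= p is assumed. *)

lemma (in finite_measure) measure_lower_bound_mono: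
  assumes "p \<le> measure M {\<omega> \<in> space M. P \<omega>}" and "0 \<le> p"
    and "\<And>\<omega>. \<omega> \<in> space M \<Longrightarrow> P \<omega> \<Longrightarrow> Q \<omega>" and "{\<omega> \<in> space M. Q \<omega>} \<in> sets M"
  shows "p \<le> measure M {\<omega> \<in> space M. Q \<omega>}"
proof (cases "{\<omega> \<in> space M. P \<omega>} \<in> sets M")
  case True
  then have "measure M {\<omega> \<in> space M. P \<omega>} \<le> measure M {\<omega> \<in> space M. Q \<omega>}"
    using assms(3,4) by (intro finite_measure_mono) auto
  then show ?thesis using assms(1) by linarith
next
  case False
  then have "p \<le> 0" using assms(1) by (simp add: measure_notin_sets)
  then show ?thesis using measure_nonneg order_trans by blast
qed

theorem theorem2:
  fixes M :: "'w measure"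
    and A :: "real^'n^'n" and B :: "real^'m^'n" and K :: "real^'n^'m"
    and W :: "nat \<Rightarrow> 'w \<Rightarrow> real^'n"
    and X :: "(real^'n) set" and U :: "(real^'m) set"
    and Rx :: "nat \<Rightarrow> (real^'n) set" and Ru :: "nat \<Rightarrow> (real^'m) set" and Zf :: "(real^'n) set"
    and px pu :: real and Nbar N T :: nat and x0 :: "real^'n"
    and vs :: "nat \<Rightarrow> 'w \<Rightarrow> nat \<Rightarrow> real^'m"
    and J :: "nat \<Rightarrow> 'w \<Rightarrow> (nat \<Rightarrow> real^'m) \<Rightarrow> real"
  assumes "prob_space M"
    and "\<forall>k\<le>Nbar. W k \<in> borel_measurable M"
    and "convex X" and "convex U"
    and "0 \<le> px" and "px \<le> 1" and "0 \<le> pu" and "pu \<le> 1"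
    and "\<forall>k\<le>Nbar. measure M {\<omega> \<in> space M. err_proc A B K W k \<omega> \<in> Rx k} \<ge> px"
    and "\<forall>k\<le>Nbar. measure M {\<omega> \<in> space M. K *v err_proc A B K W k \<omega> \<in> Ru k} \<ge> pu"
    and "1 \<le> N" and "T + N \<le> Nbar + 1"
    and "\<forall>k\<le>T. \<forall>\<omega>\<in>space M.
           mpc_feasible A B X U Rx Ru Zf N k (cl_z A B K W x0 vs k \<omega>) (vs k \<omega>) \<and>
           (\<forall>v. mpc_feasible A B X U Rx Ru Zf N k (cl_z A B K W x0 vs k \<omega>) v
                 \<longrightarrow> J k \<omega> (vs k \<omega>) \<le> J k \<omega> v)"
    and "\<forall>k\<le>T. {\<omega> \<in> space M. cl_x A B K W x0 vs k \<omega> \<in> X} \<in> sets M"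
    and "\<forall>k\<le>T. {\<omega> \<in> space M. cl_u A B K W x0 vs k \<omega> \<in> U} \<in> sets M"
  shows "\<forall>k\<le>T. measure M {\<omega> \<in> space M. cl_x A B K W x0 vs k \<omega> \<in> X} \<ge> px
              \<and> measure M {\<omega> \<in> space M. cl_u A B K W x0 vs k \<omega> \<in> U} \<ge> pu"
proof (intro allI impI conjI)
  interpret prob_space M by fact
  fix k assume "k \<le> T"
  then have "k \<le> Nbar" using assms(11,12) by linarith
  have feasible: "mpc_feasible A B X U Rx Ru Zf N k (cl_z A B K W x0 vs k \<omega>) (vs k \<omega>)"
    if "\<omega> \<in> space M" for \<omega>
    using assms(13) \<open>k \<le> T\<close> that by blast
  show "px \<le> measure M {\<omega> \<in> space M. cl_x A B K W x0 vs k \<omega> \<in> X}"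
  proof (rule measure_lower_bound_mono)
    show "px \<le> measure M {\<omega> \<in> space M. err_proc A B K W k \<omega> \<in> Rx k}"
      using assms(9) \<open>k \<le> Nbar\<close> by blast
    show "cl_x A B K W x0 vs k \<omega> \<in> X"
      if "\<omega> \<in> space M" and "err_proc A B K W k \<omega> \<in> Rx k" for \<omega>
      unfolding cl_x_eq_cl_z_plus_err
      using pdiff_add_mem mpc_feasible_first_step(1)[OF feasible[OF that(1)]] assms(11) that(2)
      by simp
  qed (use assms(5,14) \<open>k \<le> T\<close> in auto)
  show "pu \<le> measure M {\<omega> \<in> space M. cl_u A B K W x0 vs k \<omega> \<in> U}"
  proof (rule measure_lower_bound_mono)
    show "pu \<le> measure M {\<omega> \<in> space M. K *v err_proc A B K W k \<omega> \<in> Ru k}"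
      using assms(10) \<open>k \<le> Nbar\<close> by blast
    show "cl_u A B K W x0 vs k \<omega> \<in> U"
      if "\<omega> \<in> space M" and "K *v err_proc A B K W k \<omega> \<in> Ru k" for \<omega>
      unfolding cl_u_eq_nominal_plus_feedback
      using pdiff_add_mem mpc_feasible_first_step(2)[OF feasible[OF that(1)]] assms(11) that(2)
      by simp
  qed (use assms(7,15) \<open>k \<le> T\<close> in auto)
qed

end
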